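(* Let $\Gamma$ be a finitely generated discrete group with finite symmetric generating set $Q$, and let $Z\subseteq\mathrm{Sub}(\Gamma)$ be a uniformly recurrent subgroup of $\Gamma$. For any $H,H'\in Z$, the topological groupoids $\mathcal{G}_H$ and $\mathcal{G}_{H'}$ (defined in the context) are isomorphic.
   Context: Word length $l(\gamma)$ is taken with respect to $Q$. $\mathrm{Sub}(\Gamma)$ is the space of subgroups of $\Gamma$ with the topology of pointwise convergence of indicator functions, with $\Gamma$ acting by conjugation $\gamma.H=\gamma H\gamma^{-1}$. A uniformly recurrent subgroup (URS) is a nonempty closed $\Gamma$-invariant subset $Z\subseteq\mathrm{Sub}(\Gamma)$ on which every $\Gamma$-orbit is dense. For $H\le\Gamma$, the Schreier graph $S(H)=S_\Gamma^Q(H)$ is the rooted labeled graph with vertex set $\Gamma/H$, root $H$, and for each $\gamma H\in\Gamma/H$ and $q\in Q$ an edge from $\gamma H$ to $q\gamma H$ labeled $q$; $d$ is the shortest-path metric and $B_n(S,p)$ the ball of radius $n$ around a vertex $p$. Two rooted labeled balls are root-label isomorphic if there is a graph isomorphism between them preserving roots and labels (such an isomorphism is unique). Construction of $\mathcal{G}_H$ for $H\in Z$: write $S=S(H)$. For $p\in\Gamma/H$ and $n\ge 0$ let $[p]_n$ be the root-label isomorphism class of the rooted labeled ball $(B_n(S,p),p)$, and let $E_n=\{[p]_n: p\in\Gamma/H\}$ (a finite discrete set), with maps $E_{n+1}\to E_n$, $[p]_{n+1}\mapsto[p]_n$. Let $\mathcal{G}_H^0=\varprojlim E_n$. For $x=(x_n)\in\mathcal{G}_H^0$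 choose vertices $p_n\in\Gamma/H$ with $x_n=[p_n]_n$. The arrows of $\mathcal{G}_H$ are equivalence classes of pairs $(x,\gamma)$ with $x\in\mathcal{G}_H^0$, $\gamma\in\Gamma$, where $(x,\gamma)\sim(x,\gamma')$ iff $\gamma p_n=\gamma' p_n$ for all sufficiently large $n$ (independent of choices). Range $r(x,\gamma)=x$; source $s(x,\gamma)=\gamma.x$, where $(\gamma.x)_n=[\gamma p_{n+l(\gamma)}]_n$; product $(x,\gamma')(\gamma'.x,\gamma)=(x,\gamma\gamma')$; inverse $(x,\gamma)^{-1}=(\gamma.x,\gamma^{-1})$; units are $(x,e)$. The topology on $\mathcal{G}_H$ is generated by the sets $U_{c,\gamma}=\{(x,\gamma): x_N=c\}$ for $N\in\mathbb{N}$, $c\in E_N$, $\gamma\in\Gamma$ with $l(\gamma)\le N$. *)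

theory Defs
  imports "HOL-Analysis.Analysis"
begin

text \<open>The discrete group Gamma is the whole of a type of class group_add (written additively,
  not necessarily commutative). Q is the finite symmetric generating set.\<close>

definition generates :: "'g::group_add set \<Rightarrow> bool" where
  "generates Q \<longleftrightarrow> (\<forall>g. \<exists>xs. set xs \<subseteq> Q \<and> sum_list xs = g)"

definition fin_sym_gen :: "'g::group_add set \<Rightarrow> bool" where
  "fin_sym_gen Q \<longleftrightarrow> finite Q \<and> (\<forall>q\<in>Q. - q \<in> Q) \<and> generates Q"

definition wlen :: "'g::group_add set \<Rightarrow> 'g \<Rightarrow> nat" where
  "wlen Q g = (LEAST k. \<exists>xs. length xs = k \<and> set xs \<subseteq> Q \<and> sum_list xs = g)"

definition is_subgroup :: "'g::group_add set \<Rightarrow> bool" where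
  "is_subgroup H \<longleftrightarrow> 0 \<in> H \<and> (\<forall>a\<in>H. \<forall>b\<in>H. a + b \<in> H) \<and> (\<forall>a\<in>H. - a \<in> H)"

text \<open>Sub(Gamma) with the topology of pointwise convergence of indicator functions\<close>
definition Sub_top :: "'g::group_add set topology" where
  "Sub_top = pullback_topology {H. is_subgroup H} (\<lambda>H x. x \<in> H)
      (product_topology (\<lambda>_. discrete_topology UNIV) UNIV)"

definition conj :: "'g::group_add \<Rightarrow> 'g set \<Rightarrow> 'g set" where
  "conj g H = (\<lambda>h. g + h + - g) ` H"

definition URS :: "'g::group_add set set \<Rightarrow> bool" where
  "URS Z \<longleftrightarrow> Z \<noteq> {} \<and> Z \<subseteq> topspace Sub_top \<and> closedin Sub_top Z
     \<and> (\<forall>g. \<forall>H\<in>Z. conj g H \<in> Z)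
     \<and> (\<forall>H\<in>Z. Z \<subseteq> Sub_top closure_of (range (\<lambda>g. conj g H)))"

text \<open>vertices: left cosets gH; the generator q acts by p \<mapsto> qp\<close>
definition cosets :: "'g::group_add set \<Rightarrow> 'g set set" where
  "cosets H = range (\<lambda>g. (\<lambda>h. g + h) ` H)"

definition act :: "'g::group_add \<Rightarrow> 'g set \<Rightarrow> 'g set" where
  "act g p = (\<lambda>x. g + x) ` p"

text \<open>shortest path distance: following the edges labelled q1,...,qk from p leads to
  qk...q1 p\<close>
definition sdist :: "'g::group_add set \<Rightarrow> 'g set \<Rightarrow> 'g set \<Rightarrow> nat" where
  "sdist Q p p' = (LEAST k. \<exists>xs. length xs = k \<and> set xs \<subseteq> Q \<and> act (sum_list (rev xs)) p = p')"

definition sball :: "'g::group_add set \<Rightarrow> 'g set \<Rightarrow> nat \<Rightarrow> 'g set \<Rightarrow> 'g set set" where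
  "sball Q H n p = {v \<in> cosets H. sdist Q p v \<le> n}"

text \<open>root-label isomorphism of the rooted labelled balls (induced labelled subgraphs)\<close>
definition ball_iso :: "'g::group_add set \<Rightarrow> 'g set \<Rightarrow> nat \<Rightarrow> 'g set \<Rightarrow> 'g set \<Rightarrow> bool" where
  "ball_iso Q H n p p' \<longleftrightarrow> (\<exists>f. bij_betw f (sball Q H n p) (sball Q H n p') \<and> f p = p' \<and>
     (\<forall>u\<in>sball Q H n p. \<forall>v\<in>sball Q H n p. \<forall>q\<in>Q. v = act q u \<longleftrightarrow> f v = act q (f u)))"

text \<open>the isomorphism class [p]_n, represented as the set of vertices whose n-ball is
  root-label isomorphic to that of p\<close>
definition cls :: "'g::group_add set \<Rightarrow> 'g set \<Rightarrow> nat \<Rightarrow> 'g set \<Rightarrow> 'g set set" where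
  "cls Q H n p = {p' \<in> cosets H. ball_iso Q H n p p'}"

definition En :: "'g::group_add set \<Rightarrow> 'g set \<Rightarrow> nat \<Rightarrow> 'g set set set" where
  "En Q H n = cls Q H n ` cosets H"

text \<open>unit space: inverse limit of the E_n along [p]_(n+1) \<mapsto> [p]_n\<close>
definition G0 :: "'g::group_add set \<Rightarrow> 'g set \<Rightarrow> (nat \<Rightarrow> 'g set set) set" where
  "G0 Q H = {x. (\<forall>n. x n \<in> En Q H n) \<and>
                (\<forall>n. \<exists>p \<in> cosets H. x (Suc n) = cls Q H (Suc n) p \<and> x n = cls Q H n p)}"

definition rep :: "(nat \<Rightarrow> 'g set set) \<Rightarrow> nat \<Rightarrow> 'g set" where
  "rep x n = (SOME p. p \<in> x n)"

definition arr_rel :: "(nat \<Rightarrow> 'g::group_add set set) \<Rightarrow> 'g \<Rightarrow> 'g \<Rightarrow> bool" where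
  "arr_rel x g g' \<longleftrightarrow> (\<exists>N. \<forall>n\<ge>N. act g (rep x n) = act g' (rep x n))"

text \<open>an arrow [(x,g)] is represented as the pair of x and the class of g\<close>
type_synonym 'g arrow = "(nat \<Rightarrow> 'g set set) \<times> 'g set"

definition mk_arr :: "(nat \<Rightarrow> 'g::group_add set set) \<Rightarrow> 'g \<Rightarrow> 'g arrow" where
  "mk_arr x g = (x, {g'. arr_rel x g g'})"

definition arrows :: "'g::group_add set \<Rightarrow> 'g set \<Rightarrow> 'g arrow set" where
  "arrows Q H = {mk_arr x g | x g. x \<in> G0 Q H}"

definition pt_act :: "'g::group_add set \<Rightarrow> 'g set \<Rightarrow> 'g \<Rightarrow> (nat \<Rightarrow> 'g set set) \<Rightarrow> (nat \<Rightarrow> 'g set set)" where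
  "pt_act Q H g x = (\<lambda>n. cls Q H n (act g (rep x (n + wlen Q g))))"

definition elt :: "'g arrow \<Rightarrow> 'g" where
  "elt a = (SOME g. g \<in> snd a)"

definition rng :: "'g arrow \<Rightarrow> (nat \<Rightarrow> 'g set set)" where
  "rng a = fst a"

definition src :: "'g::group_add set \<Rightarrow> 'g set \<Rightarrow> 'g arrow \<Rightarrow> (nat \<Rightarrow> 'g set set)" where
  "src Q H a = pt_act Q H (elt a) (fst a)"

text \<open>(x,g')(g'.x,g) = (x, g g')\<close>
definition gmul :: "'g::group_add arrow \<Rightarrow> 'g arrow \<Rightarrow> 'g arrow" where
  "gmul a b = mk_arr (fst a) (elt b + elt a)"

definition basic_opens :: "'g::group_add set \<Rightarrow> 'g set \<Rightarrow> 'g arrow set set" where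
  "basic_opens Q H = {{a \<in> arrows Q H. \<exists>x. a = mk_arr x g \<and> x N = c} | N c g.
                        c \<in> En Q H N \<and> wlen Q g \<le> N}"

definition Gtop :: "'g::group_add set \<Rightarrow> 'g set \<Rightarrow> 'g arrow topology" where
  "Gtop Q H = subtopology (topology_generated_by (basic_opens Q H)) (arrows Q H)"

definition groupoid_iso :: "'g::group_add set \<Rightarrow> 'g set \<Rightarrow> 'g set \<Rightarrow> ('g arrow \<Rightarrow> 'g arrow) \<Rightarrow> bool" where
  "groupoid_iso Q H H' f \<longleftrightarrow>
     bij_betw f (arrows Q H) (arrows Q H') \<and>
     homeomorphic_map (Gtop Q H) (Gtop Q H') f \<and>
     (\<forall>a\<in>arrows Q H. \<forall>b\<in>arrows Q H.
        (src Q H a = rng b \<longleftrightarrow> src Q H' (f a) = rng (f b)) \<and>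
        (src Q H a = rng b \<longrightarrow> f (gmul a b) = gmul (f a) (f b)))"

definition groupoids_isomorphic :: "'g::group_add set \<Rightarrow> 'g set \<Rightarrow> 'g set \<Rightarrow> bool" where
  "groupoids_isomorphic Q H H' \<longleftrightarrow> (\<exists>f. groupoid_iso Q H H' f)"

end

theory Submission
  imports Defs
begin

text \<open>The rooted labelled \<open>n\<close>-ball of the Schreier graph at a coset \<open>p\<close> is determined by
  which words of length at most \<open>2n + 1\<close> fix \<open>p\<close>, i.e. by the finite set \<open>local_stab n p\<close>.
  Hence a unit \<open>x\<close> of \<open>\<G>\<^sub>H\<close> is determined by the subgroup \<open>lim_stab x\<close>, the union of its
  local stabilisers; the subgroups arising in this way are exactly those whose every finite
  window is a local stabiliser of some coset of \<open>H\<close>, and arrows, sources, products and basic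
  open sets can all be expressed through \<open>lim_stab\<close>. The stabiliser of the coset \<open>aH\<close> is the
  conjugate \<open>aHa\<^sup>-\<^sup>1\<close>, so uniform recurrence of \<open>Z\<close> implies that \<open>H\<close> and \<open>H'\<close> have
  the same local stabilisers. The units of \<open>\<G>\<^sub>H\<close> and \<open>\<G>\<^sub>H\<^sub>'\<close> therefore correspond through
  \<open>lim_stab\<close>, and applying this correspondence to the unit of an arrow is an isomorphism.\<close>

section \<open>Stabilisers of cosets\<close>

definition stab :: "'g::group_add set \<Rightarrow> 'g set" where
  "stab p = {g. act g p = p}"

lemma act_add: "act (a + b) p = act a (act b p)"
  unfolding act_def by (auto simp: image_image add.assoc)

lemma act_zero [simp]: "act 0 p = p"
  by (simp add: act_def)

lemma act_eq_iff_stab: "act a p = act b p \<longleftrightarrow> - b + a \<in> stab p"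
proof
  assume "act a p = act b p"
  then have "act (- b + a) p = act (- b + b) p" by (simp only: act_add)
  then show "- b + a \<in> stab p" by (simp add: stab_def)
next
  assume "- b + a \<in> stab p"
  then have "act b (act (- b + a) p) = act b p" by (simp add: stab_def)
  then show "act a p = act b p" by (simp add: act_add [symmetric] add.assoc [symmetric])
qed

lemma act_coset: "act g ((\<lambda>h. a + h) ` H) = (\<lambda>h. g + a + h) ` H"
  unfolding act_def by (auto simp: image_image add.assoc)

lemma act_in_cosets: "p \<in> cosets H \<Longrightarrow> act g p \<in> cosets H"
  unfolding cosets_def by (auto simp: act_coset)

lemma mem_conj_iff: "g \<in> conj a K \<longleftrightarrow> - a + g + a \<in> K"
proof
  assume "g \<in> conj a K"
  then show "- a + g + a \<in> K" unfolding conj_def by (auto simp: add.assoc)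
next
  assume "- a + g + a \<in> K"
  moreover have "g = a + (- a + g + a) + - a" by (simp add: add.assoc)
  ultimately show "g \<in> conj a K" unfolding conj_def by blast
qed

lemma stab_act: "h \<in> stab (act g p) \<longleftrightarrow> - g + h + g \<in> stab p"
  using act_eq_iff_stab [of "h + g" p g] by (simp add: stab_def act_add add.assoc)

lemma stab_subgroup:
  assumes "is_subgroup H"
  shows "stab H = H"
proof (intro set_eqI iffI)
  fix g assume "g \<in> stab H"
  then have "g + 0 \<in> H" using assms unfolding stab_def act_def is_subgroup_def by blast
  then show "g \<in> H" by simp
next
  fix g assume g: "g \<in> H"
  have "x \<in> (\<lambda>h. g + h) ` H" if "x \<in> H" for x
    using g that assms image_eqI [of x "\<lambda>h. g + h" "- g + x"]
    unfolding is_subgroup_def by (simp add: add.assoc [symmetric])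
  then show "g \<in> stab H" using g assms unfolding stab_def act_def is_subgroup_def by blast
qed

lemma stab_coset:
  assumes "is_subgroup H"
  shows "stab ((\<lambda>h. a + h) ` H) = conj a H"
  using stab_act [of _ a H] stab_subgroup [OF assms]
  by (auto simp: mem_conj_iff act_def [symmetric])

lemma sum_list_rev_uminus: "sum_list (rev (map uminus xs)) = - sum_list (xs :: 'g::group_add list)"
  by (induction xs) (auto simp: minus_add)

section \<open>Topologies generated by a family of sets\<close>

lemma generate_topology_on_subset_Union: "generate_topology_on B U \<Longrightarrow> U \<subseteq> \<Union>B"
  by (induction rule: generate_topology_on.induct) auto

lemma generate_topology_on_image:
  assumes inj: "inj_on f (\<Union>B)" and "generate_topology_on B U"
  shows "generate_topology_on ((`) f ` B) (f ` U)"
  using assms(2)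
proof (induction rule: generate_topology_on.induct)
  case Empty
  then show ?case by (simp add: generate_topology_on.Empty)
next
  case (Int a b)
  have "f ` (a \<inter> b) = f ` a \<inter> f ` b"
    using inj_on_image_Int [OF inj] generate_topology_on_subset_Union [OF Int.hyps(1)]
      generate_topology_on_subset_Union [OF Int.hyps(2)] by blast
  then show ?case using Int.IH by (simp add: generate_topology_on.Int)
next
  case (UN K)
  then show ?case unfolding image_Union by (intro generate_topology_on.UN) auto
next
  case (Basis s)
  then show ?case by (simp add: generate_topology_on.Basis)
qed

lemma homeomorphic_map_topology_generated_by:
  assumes inj: "inj_on f (\<Union>B)"
  shows "homeomorphic_map (topology_generated_by B) (topology_generated_by ((`) f ` B)) f"
proof (rule bijective_open_imp_homeomorphic_map)
  let ?X = "topology_generated_by B" and ?Y = "topology_generated_by ((`) f ` B)"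
  define g where "g = inv_into (\<Union>B) f"
  have g_image: "(`) g ` (`) f ` B = (\<lambda>U. U) ` B"
    unfolding image_image g_def using inv_into_image_cancel [OF inj] by (intro image_cong) auto
  have inj_g: "inj_on g (\<Union>((`) f ` B))"
    unfolding g_def by (rule inj_on_inv_into) auto
  have open_g: "openin ?X (g ` V)" if "openin ?Y V" for V
    using generate_topology_on_image [OF inj_g] that g_image
    by (simp add: openin_topology_generated_by_iff)
  show "open_map ?X ?Y f"
    unfolding open_map_def openin_topology_generated_by_iff using generate_topology_on_image [OF inj] by blast
  show "continuous_map ?X ?Y f"
    unfolding continuous_map_openin_preimage_eq
  proof (intro conjI allI impI)
    show "f \<in> topspace ?X \<rightarrow> topspace ?Y" by auto
    fix V assume V: "openin ?Y V"
    then have "V \<subseteq> f ` \<Union>B" using openin_subset by fastforce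
    then have "g y \<in> \<Union>B \<and> f (g y) = y" if "y \<in> V" for y
      using that unfolding g_def by (meson inv_into_into f_inv_into_f subsetD)
    then have "g ` V \<subseteq> topspace ?X \<inter> f -` V" by auto
    moreover have "topspace ?X \<inter> f -` V \<subseteq> g ` V"
    proof
      fix x assume "x \<in> topspace ?X \<inter> f -` V"
      then have "x = g (f x)" and "f x \<in> V" unfolding g_def using inv_into_f_f [OF inj] by auto
      then show "x \<in> g ` V" by blast
    qed
    ultimately have "topspace ?X \<inter> f -` V = g ` V" by (rule subset_antisym [rotated])
    then show "openin ?X (topspace ?X \<inter> f -` V)" using open_g [OF V] by simp
  qed
  show "f ` topspace ?X = topspace ?Y" by (simp add: image_Union)
  show "inj_on f (topspace ?X)" using inj by simp
qed

section \<open>The space of subgroups\<close>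

lemma topspace_Sub_top: "topspace Sub_top = {H. is_subgroup H}"
  unfolding Sub_top_def topspace_pullback_topology by (auto simp: PiE_iff)

lemma URS_subgroup: "URS Z \<Longrightarrow> H \<in> Z \<Longrightarrow> is_subgroup H"
  unfolding URS_def topspace_Sub_top by blast

lemma openin_Sub_top_trace:
  assumes F: "finite F"
  shows "openin Sub_top {K \<in> topspace Sub_top. K \<inter> F = K0 \<inter> F}"
proof -
  let ?T = "product_topology (\<lambda>_. discrete_topology (UNIV :: bool set)) UNIV"
  define X where "X i = (if i \<in> F then {i \<in> K0} else UNIV)" for i
  have "openin ?T (PiE UNIV X)"
  proof (rule product_topology_basis)
    have "{i. X i \<noteq> topspace (discrete_topology UNIV)} \<subseteq> F" unfolding X_def by auto
    then show "finite {i. X i \<noteq> topspace (discrete_topology UNIV)}" using F finite_subset by blast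
  qed simp
  moreover have "{K \<in> topspace Sub_top. K \<inter> F = K0 \<inter> F} = (\<lambda>H x. x \<in> H) -` PiE UNIV X \<inter> {H. is_subgroup H}"
    unfolding topspace_Sub_top X_def PiE_UNIV_domain by (auto split: if_splits; blast)
  ultimately show ?thesis unfolding Sub_top_def openin_pullback_topology by blast
qed

section \<open>Balls in the Schreier graph\<close>

locale generating_set =
  fixes Q :: "'g::group_add set"
  assumes fin_sym_gen: "fin_sym_gen Q"
begin

definition word_ball :: "nat \<Rightarrow> 'g set" where
  "word_ball n = {g. \<exists>xs. length xs \<le> n \<and> set xs \<subseteq> Q \<and> sum_list xs = g}"

lemma sum_list_in_word_ball: "length xs \<le> n \<Longrightarrow> set xs \<subseteq> Q \<Longrightarrow> sum_list xs \<in> word_ball n"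
  unfolding word_ball_def by blast

lemma zero_in_word_ball [simp]: "0 \<in> word_ball n"
  using sum_list_in_word_ball [of "[]"] by simp

lemma word_ball_mono: "n \<le> m \<Longrightarrow> word_ball n \<subseteq> word_ball m"
  unfolding word_ball_def using le_trans by blast

lemma word_ball_add:
  assumes "a \<in> word_ball n" and "b \<in> word_ball m"
  shows "a + b \<in> word_ball (n + m)"
proof -
  obtain xs ys where "length xs \<le> n" "set xs \<subseteq> Q" "sum_list xs = a"
    and "length ys \<le> m" "set ys \<subseteq> Q" "sum_list ys = b"
    using assms unfolding word_ball_def by auto
  then show ?thesis using sum_list_in_word_ball [of "xs @ ys"] by simp
qed

lemma generator_in_word_ball: "q \<in> Q \<Longrightarrow> q \<in> word_ball 1"
  using sum_list_in_word_ball [of "[q]"] by simp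

lemma word_ball_uminus:
  assumes "a \<in> word_ball n"
  shows "- a \<in> word_ball n"
proof -
  obtain xs where "length xs \<le> n" "set xs \<subseteq> Q" "sum_list xs = a"
    using assms unfolding word_ball_def by auto
  moreover have "set (rev (map uminus xs)) \<subseteq> Q" if "set xs \<subseteq> Q"
    using that fin_sym_gen unfolding fin_sym_gen_def by auto
  ultimately show ?thesis
    using sum_list_in_word_ball [of "rev (map uminus xs)"] by (simp add: sum_list_rev_uminus)
qed

lemma in_word_ball_wlen: "g \<in> word_ball (wlen Q g)"
proof -
  let ?P = "\<lambda>k. \<exists>xs. length xs = k \<and> set xs \<subseteq> Q \<and> sum_list xs = g"
  obtain xs where "set xs \<subseteq> Q" "sum_list xs = g"
    using fin_sym_gen unfolding fin_sym_gen_def generates_def by blast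
  then have "?P (length xs)" by blast
  then have "?P (wlen Q g)" unfolding wlen_def by (rule LeastI)
  then show ?thesis using sum_list_in_word_ball by fastforce
qed

lemma finite_word_ball: "finite (word_ball n)"
proof -
  have "word_ball n \<subseteq> sum_list ` {xs. set xs \<subseteq> Q \<and> length xs \<le> n}"
    unfolding word_ball_def by auto
  moreover have "finite {xs. set xs \<subseteq> Q \<and> length xs \<le> n}"
    using fin_sym_gen finite_lists_length_le unfolding fin_sym_gen_def by blast
  ultimately show ?thesis using finite_surj by blast
qed

lemma word_ball_split:
  assumes "g \<in> word_ball (2 * n + 1)"
  shows "\<exists>L\<in>word_ball n. \<exists>R\<in>word_ball n. g = - L + R \<or> (\<exists>q\<in>Q. g = - L + (q + R))"
proof -
  obtain xs where xs: "length xs \<le> 2 * n + 1" "set xs \<subseteq> Q" "sum_list xs = g"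
    using assms unfolding word_ball_def by auto
  define L where "L = - sum_list (take n xs)"
  have L: "L \<in> word_ball n"
    unfolding L_def using xs set_take_subset [of n xs]
    by (intro word_ball_uminus sum_list_in_word_ball) auto
  show ?thesis
  proof (cases "length xs \<le> 2 * n")
    case True
    have "sum_list (drop n xs) \<in> word_ball n"
      using xs True set_drop_subset [of n xs] by (intro sum_list_in_word_ball) auto
    moreover have "g = - L + sum_list (drop n xs)"
      using xs by (simp add: L_def flip: sum_list_append)
    ultimately show ?thesis using L by blast
  next
    case False
    then have "xs = take n xs @ xs ! n # drop (Suc n) xs"
      using xs by (simp add: id_take_nth_drop)
    then have "sum_list xs = sum_list (take n xs) + (xs ! n + sum_list (drop (Suc n) xs))"
      by (metis sum_list.Cons sum_list_append)
    then have "g = - L + (xs ! n + sum_list (drop (Suc n) xs))"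
      using xs by (simp add: L_def)
    moreover have "sum_list (drop (Suc n) xs) \<in> word_ball n"
      using xs set_drop_subset [of "Suc n" xs] by (intro sum_list_in_word_ball) auto
    moreover have "xs ! n \<in> Q" using xs False nth_mem by fastforce
    ultimately show ?thesis using L by blast
  qed
qed

lemma sball_eq_word_ball:
  assumes p: "p \<in> cosets H"
  shows "sball Q H n p = (\<lambda>g. act g p) ` word_ball n"
proof -
  let ?P = "\<lambda>v k. \<exists>xs. length xs = k \<and> set xs \<subseteq> Q \<and> act (sum_list (rev xs)) p = v"
  have "sdist Q p v \<le> n \<longleftrightarrow> (\<exists>g\<in>word_ball n. act g p = v)" if v: "v \<in> cosets H" for v
  proof
    obtain a b where a: "p = (\<lambda>h. a + h) ` H" and b: "v = (\<lambda>h. b + h) ` H"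
      using p v unfolding cosets_def by auto
    obtain xs where xs: "set xs \<subseteq> Q" "sum_list xs = b + - a"
      using fin_sym_gen unfolding fin_sym_gen_def generates_def by blast
    have "?P v (length (rev xs))"
      using xs a b by (intro exI [of _ "rev xs"]) (simp add: act_coset add.assoc)
    then have "?P v (sdist Q p v)" unfolding sdist_def by (rule LeastI)
    then obtain ys where "length ys = sdist Q p v" "set ys \<subseteq> Q" "act (sum_list (rev ys)) p = v"
      by blast
    moreover assume "sdist Q p v \<le> n"
    ultimately show "\<exists>g\<in>word_ball n. act g p = v"
      using sum_list_in_word_ball [of "rev ys"] by auto
  next
    assume "\<exists>g\<in>word_ball n. act g p = v"
    then obtain ys where ys: "length ys \<le> n" "set ys \<subseteq> Q" "act (sum_list ys) p = v"
      unfolding word_ball_def by auto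
    then have "?P v (length (rev ys))" by (intro exI [of _ "rev ys"]) auto
    then have "sdist Q p v \<le> length (rev ys)" unfolding sdist_def by (rule Least_le)
    then show "sdist Q p v \<le> n" using ys by simp
  qed
  then show ?thesis unfolding sball_def using act_in_cosets [OF p] by auto
qed

definition window :: "nat \<Rightarrow> 'g set" where
  "window n = word_ball (2 * n + 1)"

text \<open>For words \<open>a, b\<close> of length at most \<open>n\<close>, the labelled \<open>n\<close>-ball around \<open>p\<close> records
  whether \<open>a p = b p\<close> and whether \<open>b p = q a p\<close>, i.e. whether \<open>-b + a\<close>, resp. \<open>-b + q + a\<close>,
  fixes \<open>p\<close>; these words have length at most \<open>2n + 1\<close>.\<close>

definition local_stab :: "nat \<Rightarrow> 'g set \<Rightarrow> 'g set" where
  "local_stab n p = stab p \<inter> window n"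

lemma window_mono: "n \<le> m \<Longrightarrow> window n \<subseteq> window m"
  unfolding window_def by (rule word_ball_mono) simp

lemma finite_window: "finite (window n)"
  unfolding window_def by (rule finite_word_ball)

lemma eventually_in_window: "\<exists>N. \<forall>n\<ge>N. g \<in> window n"
proof -
  have "g \<in> window (wlen Q g)"
    using in_word_ball_wlen word_ball_mono [of "wlen Q g" "2 * wlen Q g + 1"]
    unfolding window_def by auto
  then show ?thesis using window_mono by blast
qed

lemma local_stab_mono: "n \<le> m \<Longrightarrow> local_stab n p = local_stab m p \<inter> window n"
  unfolding local_stab_def using window_mono by blast

lemma ball_iso_act:
  assumes p: "p \<in> cosets H" and root: "f p = p'"
    and edges: "\<forall>u\<in>sball Q H n p. \<forall>v\<in>sball Q H n p. \<forall>q\<in>Q. v = act q u \<longleftrightarrow> f v = act q (f u)"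
    and a: "a \<in> word_ball n"
  shows "f (act a p) = act a p'"
proof -
  have "f (act (sum_list xs) p) = act (sum_list xs) p'" if "length xs \<le> n" "set xs \<subseteq> Q" for xs
    using that
  proof (induction xs)
    case Nil
    then show ?case using root by simp
  next
    case (Cons q xs)
    have "act (sum_list xs) p \<in> sball Q H n p" "act q (act (sum_list xs) p) \<in> sball Q H n p"
      using Cons.prems sum_list_in_word_ball [of xs] sum_list_in_word_ball [of "q # xs"]
      unfolding sball_eq_word_ball [OF p] by (auto simp: act_add [symmetric])
    moreover have "q \<in> Q" using Cons.prems by simp
    ultimately have "f (act q (act (sum_list xs) p)) = act q (f (act (sum_list xs) p))"
      using edges by blast
    then show ?case using Cons by (simp add: act_add)
  qed
  then show ?thesis using a unfolding word_ball_def by blast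
qed

lemma local_stab_eq_if_ball_iso:
  assumes p: "p \<in> cosets H" and p': "p' \<in> cosets H" and iso: "ball_iso Q H n p p'"
  shows "local_stab n p = local_stab n p'"
proof -
  obtain f where bij: "bij_betw f (sball Q H n p) (sball Q H n p')" and root: "f p = p'"
    and edges: "\<forall>u\<in>sball Q H n p. \<forall>v\<in>sball Q H n p. \<forall>q\<in>Q. v = act q u \<longleftrightarrow> f v = act q (f u)"
    using iso unfolding ball_iso_def by blast
  have f_act: "f (act a p) = act a p'" if "a \<in> word_ball n" for a
    using ball_iso_act [OF p root edges that] .
  have in_ball: "act a p \<in> sball Q H n p" if "a \<in> word_ball n" for a
    using that unfolding sball_eq_word_ball [OF p] by blast
  have "g \<in> stab p \<longleftrightarrow> g \<in> stab p'" if g: "g \<in> window n" for g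
  proof -
    obtain L R where L: "L \<in> word_ball n" and R: "R \<in> word_ball n"
      and split: "g = - L + R \<or> (\<exists>q\<in>Q. g = - L + (q + R))"
      using word_ball_split g unfolding window_def by blast
    then consider "g = - L + R" | q where "q \<in> Q" "g = - L + (q + R)" by blast
    then show ?thesis
    proof cases
      case 1
      have "act R p = act L p \<longleftrightarrow> f (act R p) = f (act L p)"
        using bij in_ball L R unfolding bij_betw_def inj_on_def by metis
      then show ?thesis using 1 act_eq_iff_stab f_act L R by metis
    next
      case (2 q)
      have "act L p = act q (act R p) \<longleftrightarrow> f (act L p) = act q (f (act R p))"
        using edges in_ball L R \<open>q \<in> Q\<close> by blast
      then show ?thesis using 2 act_eq_iff_stab act_add f_act L R by metis
    qed
  qed
  then show ?thesis unfolding local_stab_def by blast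
qed

lemma stab_iff_if_local_stab_eq:
  assumes "local_stab n p = local_stab n p'" and "c \<in> word_ball (n + (1 + n))"
  shows "c \<in> stab p \<longleftrightarrow> c \<in> stab p'"
proof -
  have "c \<in> window n" using assms(2) unfolding window_def by (simp add: mult_2)
  then show ?thesis using assms(1) unfolding local_stab_def by blast
qed

lemma act_eq_iff_if_local_stab_eq:
  assumes eq: "local_stab n p = local_stab n p'" and a: "a \<in> word_ball n" and b: "b \<in> word_ball n"
  shows "act a p = act b p \<longleftrightarrow> act a p' = act b p'"
proof -
  have "- b + a \<in> word_ball (n + (1 + n))"
    using word_ball_add [OF word_ball_uminus [OF b] a] word_ball_mono [of "n + n" "n + (1 + n)"]
    by auto
  then show ?thesis using stab_iff_if_local_stab_eq [OF eq] by (simp add: act_eq_iff_stab)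
qed

lemma edge_iff_if_local_stab_eq:
  assumes eq: "local_stab n p = local_stab n p'"
    and a: "a \<in> word_ball n" and b: "b \<in> word_ball n" and q: "q \<in> Q"
  shows "act b p = act q (act a p) \<longleftrightarrow> act b p' = act q (act a p')"
proof -
  have "- b + (q + a) \<in> word_ball (n + (1 + n))"
    using word_ball_add [OF word_ball_uminus [OF b] word_ball_add [OF generator_in_word_ball [OF q] a]] .
  then have "act (q + a) p = act b p \<longleftrightarrow> act (q + a) p' = act b p'"
    using stab_iff_if_local_stab_eq [OF eq] by (simp add: act_eq_iff_stab)
  then show ?thesis by (metis act_add)
qed

lemma ball_iso_if_local_stab_eq:
  assumes p: "p \<in> cosets H" and p': "p' \<in> cosets H" and eq: "local_stab n p = local_stab n p'"
  shows "ball_iso Q H n p p'"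
proof -
  note vertex_eq = act_eq_iff_if_local_stab_eq [OF eq]
  define f where "f v = act (SOME a. a \<in> word_ball n \<and> act a p = v) p'" for v
  have f_act: "f (act a p) = act a p'" if a: "a \<in> word_ball n" for a
  proof -
    define a' where "a' = (SOME a'. a' \<in> word_ball n \<and> act a' p = act a p)"
    have "a' \<in> word_ball n \<and> act a' p = act a p"
      unfolding a'_def by (rule someI_ex) (use a in blast)
    then show ?thesis using vertex_eq [OF _ a] unfolding f_def a'_def [symmetric] by blast
  qed
  have "inj_on f ((\<lambda>a. act a p) ` word_ball n)"
  proof (rule inj_onI)
    fix u v assume "u \<in> (\<lambda>a. act a p) ` word_ball n" "v \<in> (\<lambda>a. act a p) ` word_ball n" "f u = f v"
    then obtain a b where a: "a \<in> word_ball n" and b: "b \<in> word_ball n"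
      and "u = act a p" "v = act b p" "f u = f v"
      by blast
    then show "u = v" using f_act [OF a] f_act [OF b] vertex_eq [OF a b] by simp
  qed
  moreover have "f ` (\<lambda>a. act a p) ` word_ball n = (\<lambda>a. act a p') ` word_ball n"
    unfolding image_image using f_act by (rule image_cong [OF refl])
  ultimately have "bij_betw f (sball Q H n p) (sball Q H n p')"
    unfolding sball_eq_word_ball [OF p] sball_eq_word_ball [OF p'] bij_betw_def ..
  moreover have "f p = p'" using f_act [of 0] by simp
  moreover have "v = act q u \<longleftrightarrow> f v = act q (f u)"
    if u: "u \<in> sball Q H n p" and v: "v \<in> sball Q H n p" and q: "q \<in> Q" for u v q
  proof -
    obtain a b where a: "a \<in> word_ball n" and b: "b \<in> word_ball n" and "u = act a p" "v = act b p"
      using u v unfolding sball_eq_word_ball [OF p] by blast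
    then show ?thesis using f_act [OF a] f_act [OF b] edge_iff_if_local_stab_eq [OF eq a b q] by simp
  qed
  ultimately show ?thesis unfolding ball_iso_def by blast
qed

lemma ball_iso_iff_local_stab_eq:
  "p \<in> cosets H \<Longrightarrow> p' \<in> cosets H \<Longrightarrow> ball_iso Q H n p p' \<longleftrightarrow> local_stab n p = local_stab n p'"
  using local_stab_eq_if_ball_iso ball_iso_if_local_stab_eq by blast

lemma cls_eq: "p \<in> cosets H \<Longrightarrow> cls Q H n p = {p' \<in> cosets H. local_stab n p' = local_stab n p}"
  unfolding cls_def using ball_iso_iff_local_stab_eq by auto

lemma cls_eq_iff:
  "p \<in> cosets H \<Longrightarrow> p' \<in> cosets H \<Longrightarrow> cls Q H n p = cls Q H n p' \<longleftrightarrow> local_stab n p = local_stab n p'"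
  by (auto simp: cls_eq set_eq_iff)

lemma in_cls_self: "p \<in> cosets H \<Longrightarrow> p \<in> cls Q H n p"
  by (simp add: cls_eq)

section \<open>The unit space\<close>

text \<open>\<open>lim_stab x\<close> is the point of the orbit closure of \<open>H\<close> in \<open>Sub(\<Gamma>)\<close> represented by the unit \<open>x\<close>.\<close>

definition lim_stab :: "(nat \<Rightarrow> 'g set set) \<Rightarrow> 'g set" where
  "lim_stab x = (\<Union>n. local_stab n (rep x n))"

lemma G0_rep:
  assumes x: "x \<in> G0 Q H"
  shows "rep x n \<in> cosets H" and "x n = cls Q H n (rep x n)"
proof -
  obtain p where p: "p \<in> cosets H" "x n = cls Q H n p"
    using x unfolding G0_def En_def by blast
  then have "rep x n \<in> x n" unfolding rep_def using in_cls_self by (metis someI)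
  then have "rep x n \<in> cosets H" and "local_stab n (rep x n) = local_stab n p"
    using p cls_eq by auto
  then show "rep x n \<in> cosets H" and "x n = cls Q H n (rep x n)"
    using p cls_eq_iff by auto
qed

lemma local_stab_rep_consistent:
  assumes x: "x \<in> G0 Q H" and "n \<le> m"
  shows "local_stab n (rep x m) = local_stab n (rep x n)"
  using \<open>n \<le> m\<close>
proof (induction m rule: dec_induct)
  case (step m)
  obtain p where p: "p \<in> cosets H" "x (Suc m) = cls Q H (Suc m) p" "x m = cls Q H m p"
    using x unfolding G0_def by blast
  have "local_stab (Suc m) (rep x (Suc m)) = local_stab (Suc m) p"
    using G0_rep [OF x] p cls_eq_iff by metis
  moreover have "local_stab m (rep x m) = local_stab m p"
    using G0_rep [OF x] p cls_eq_iff by metis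
  ultimately have "local_stab m (rep x (Suc m)) = local_stab m (rep x m)"
    using local_stab_mono [of m "Suc m"] by simp
  then show ?case using step local_stab_mono by metis
qed simp

lemma lim_stab_window:
  assumes x: "x \<in> G0 Q H"
  shows "lim_stab x \<inter> window n = local_stab n (rep x n)"
proof
  show "lim_stab x \<inter> window n \<subseteq> local_stab n (rep x n)"
  proof
    fix g assume g: "g \<in> lim_stab x \<inter> window n"
    then obtain m where "g \<in> local_stab m (rep x m)" unfolding lim_stab_def by blast
    then have "g \<in> local_stab m (rep x (max m n))"
      using local_stab_rep_consistent [OF x, of m "max m n"] by simp
    then have "g \<in> local_stab n (rep x (max m n))"
      using g unfolding local_stab_def by blast
    then show "g \<in> local_stab n (rep x n)"
      using local_stab_rep_consistent [OF x, of n "max m n"] by simp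
  qed
  show "local_stab n (rep x n) \<subseteq> lim_stab x \<inter> window n"
    unfolding lim_stab_def local_stab_def by blast
qed

lemma eq_if_windows_eq:
  assumes "\<And>n. A \<inter> window n = B \<inter> window n"
  shows "A = B"
proof (intro set_eqI)
  fix g
  obtain N where "\<forall>n\<ge>N. g \<in> window n" using eventually_in_window by blast
  then show "g \<in> A \<longleftrightarrow> g \<in> B" using assms [of N] by blast
qed

lemma inj_on_lim_stab: "inj_on lim_stab (G0 Q H)"
proof (rule inj_onI)
  fix x y assume x: "x \<in> G0 Q H" and y: "y \<in> G0 Q H" and eq: "lim_stab x = lim_stab y"
  show "x = y"
  proof
    fix n
    have "local_stab n (rep x n) = local_stab n (rep y n)"
      using lim_stab_window [OF x] lim_stab_window [OF y] eq by simp
    then show "x n = y n" using G0_rep [OF x] G0_rep [OF y] cls_eq_iff by metis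
  qed
qed

lemma G0_from_local_stabs:
  assumes r: "\<And>n. r n \<in> cosets H" and local: "\<And>n. local_stab n (r n) = K \<inter> window n"
  shows "(\<lambda>n. cls Q H n (r n)) \<in> G0 Q H" and "lim_stab (\<lambda>n. cls Q H n (r n)) = K"
proof -
  let ?x = "\<lambda>n. cls Q H n (r n)"
  have "local_stab n (r (Suc n)) = local_stab n (r n)" for n
  proof -
    have "local_stab n (r (Suc n)) = local_stab (Suc n) (r (Suc n)) \<inter> window n"
      by (rule local_stab_mono) simp
    also have "\<dots> = K \<inter> window n" using local window_mono [of n "Suc n"] by auto
    finally show ?thesis using local by simp
  qed
  then have "\<exists>p\<in>cosets H. ?x (Suc n) = cls Q H (Suc n) p \<and> ?x n = cls Q H n p" for n
    using r by (auto simp: cls_eq_iff)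
  moreover have "?x n \<in> En Q H n" for n unfolding En_def using r by blast
  ultimately show x: "?x \<in> G0 Q H" unfolding G0_def by blast
  have "rep ?x n \<in> ?x n" for n
    unfolding rep_def using in_cls_self [OF r] by (rule someI)
  then have rep_local: "local_stab n (rep ?x n) = local_stab n (r n)" for n
    using r by (simp add: cls_eq)
  show "lim_stab ?x = K"
    by (rule eq_if_windows_eq) (simp add: lim_stab_window [OF x] rep_local local)
qed

lemma lim_stab_image_iff:
  "K \<in> lim_stab ` G0 Q H \<longleftrightarrow> (\<forall>n. K \<inter> window n \<in> local_stab n ` cosets H)"
proof
  assume "K \<in> lim_stab ` G0 Q H"
  then obtain x where x: "x \<in> G0 Q H" and "K = lim_stab x" by blast
  then have "K \<inter> window n = local_stab n (rep x n)" for n by (simp add: lim_stab_window)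
  then show "\<forall>n. K \<inter> window n \<in> local_stab n ` cosets H"
    using G0_rep(1) [OF x] by blast
next
  assume "\<forall>n. K \<inter> window n \<in> local_stab n ` cosets H"
  then have "\<forall>n. \<exists>p. p \<in> cosets H \<and> local_stab n p = K \<inter> window n" by force
  then obtain r where r: "\<And>n. r n \<in> cosets H" "\<And>n. local_stab n (r n) = K \<inter> window n"
    by metis
  have "K = lim_stab (\<lambda>n. cls Q H n (r n))" using G0_from_local_stabs(2) [OF r] by simp
  then show "K \<in> lim_stab ` G0 Q H" using G0_from_local_stabs(1) [OF r] by blast
qed

lemma G0_eq_cls_iff:
  assumes x: "x \<in> G0 Q H" and p: "p \<in> cosets H"
  shows "x n = cls Q H n p \<longleftrightarrow> lim_stab x \<inter> window n = local_stab n p"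
  unfolding lim_stab_window [OF x] G0_rep(2) [OF x, of n]
  using cls_eq_iff [OF G0_rep(1) [OF x] p] .

section \<open>Arrows and basic open sets\<close>

lemma conj_in_window:
  assumes "g \<in> word_ball l" and "h \<in> window n"
  shows "- g + h + g \<in> window (n + l)"
proof -
  have "- g + h + g \<in> word_ball (l + (2 * n + 1) + l)"
    using assms unfolding window_def by (intro word_ball_add word_ball_uminus)
  moreover have "l + (2 * n + 1) + l = 2 * (n + l) + 1" by simp
  ultimately show ?thesis unfolding window_def by metis
qed

lemma
  assumes x: "x \<in> G0 Q H"
  shows pt_act_in_G0: "pt_act Q H g x \<in> G0 Q H"
    and lim_stab_pt_act: "lim_stab (pt_act Q H g x) = conj g (lim_stab x)"
proof -
  define l where "l = wlen Q g"
  define r where "r n = act g (rep x (n + l))" for n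
  have r: "r n \<in> cosets H" for n unfolding r_def using G0_rep(1) [OF x] by (rule act_in_cosets)
  have "local_stab n (r n) = conj g (lim_stab x) \<inter> window n" for n
  proof -
    have "h \<in> stab (r n) \<longleftrightarrow> h \<in> conj g (lim_stab x)" if h: "h \<in> window n" for h
    proof -
      have "- g + h + g \<in> window (n + l)"
        using conj_in_window [OF _ h] in_word_ball_wlen unfolding l_def by blast
      then have "- g + h + g \<in> lim_stab x \<longleftrightarrow> - g + h + g \<in> stab (rep x (n + l))"
        using lim_stab_window [OF x, of "n + l"] unfolding local_stab_def by blast
      then show ?thesis unfolding r_def stab_act mem_conj_iff by simp
    qed
    then show ?thesis unfolding local_stab_def by blast
  qed
  moreover have "pt_act Q H g x = (\<lambda>n. cls Q H n (r n))"
    unfolding pt_act_def r_def l_def by simp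
  ultimately show "pt_act Q H g x \<in> G0 Q H" "lim_stab (pt_act Q H g x) = conj g (lim_stab x)"
    using G0_from_local_stabs [OF r] by simp_all
qed

definition lcoset :: "'g set \<Rightarrow> 'g \<Rightarrow> 'g set" where
  "lcoset K g = {g'. - g' + g \<in> K}"

lemma arr_rel_iff:
  assumes x: "x \<in> G0 Q H"
  shows "arr_rel x g g' \<longleftrightarrow> - g' + g \<in> lim_stab x"
proof -
  obtain M where M: "\<forall>n\<ge>M. - g' + g \<in> window n" using eventually_in_window by blast
  have eq: "act g (rep x n) = act g' (rep x n) \<longleftrightarrow> - g' + g \<in> lim_stab x" if "n \<ge> M" for n
    using M that lim_stab_window [OF x, of n] unfolding act_eq_iff_stab local_stab_def by blast
  show ?thesis
  proof
    assume "arr_rel x g g'"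
    then obtain N where "\<forall>n\<ge>N. act g (rep x n) = act g' (rep x n)" unfolding arr_rel_def by blast
    then show "- g' + g \<in> lim_stab x" using eq [of "max M N"] by simp
  next
    assume "- g' + g \<in> lim_stab x"
    then show "arr_rel x g g'" unfolding arr_rel_def using eq by blast
  qed
qed

lemma mk_arr_eq:
  assumes "x \<in> G0 Q H"
  shows "mk_arr x g = (x, lcoset (lim_stab x) g)"
  unfolding mk_arr_def lcoset_def using arr_rel_iff [OF assms] by auto

lemma arrows_eq: "arrows Q H = {(x, lcoset (lim_stab x) g) | x g. x \<in> G0 Q H}"
  unfolding arrows_def by (metis mk_arr_eq)

lemma fst_arrow_in_G0: "a \<in> arrows Q H \<Longrightarrow> fst a \<in> G0 Q H"
  unfolding arrows_def mk_arr_def by auto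

definition basic_open :: "'g set \<Rightarrow> nat \<Rightarrow> 'g set \<Rightarrow> 'g \<Rightarrow> 'g arrow set" where
  "basic_open H N T g = (\<lambda>x. (x, lcoset (lim_stab x) g)) ` {x \<in> G0 Q H. lim_stab x \<inter> window N = T}"

lemma basic_open_eq:
  assumes p: "p \<in> cosets H"
  shows "{a \<in> arrows Q H. \<exists>x. a = mk_arr x g \<and> x N = cls Q H N p} = basic_open H N (local_stab N p) g"
proof
  show "{a \<in> arrows Q H. \<exists>x. a = mk_arr x g \<and> x N = cls Q H N p} \<subseteq> basic_open H N (local_stab N p) g"
  proof
    fix a assume "a \<in> {a \<in> arrows Q H. \<exists>x. a = mk_arr x g \<and> x N = cls Q H N p}"
    then obtain x where a: "a \<in> arrows Q H" "a = mk_arr x g" and xN: "x N = cls Q H N p" by blast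
    have "fst a = x" using a(2) by (simp add: mk_arr_def)
    then have x: "x \<in> G0 Q H" using fst_arrow_in_G0 [OF a(1)] by simp
    have "lim_stab x \<inter> window N = local_stab N p" using xN G0_eq_cls_iff [OF x p] by simp
    then show "a \<in> basic_open H N (local_stab N p) g"
      unfolding basic_open_def a(2) mk_arr_eq [OF x] using x by blast
  qed
  show "basic_open H N (local_stab N p) g \<subseteq> {a \<in> arrows Q H. \<exists>x. a = mk_arr x g \<and> x N = cls Q H N p}"
  proof
    fix a assume "a \<in> basic_open H N (local_stab N p) g"
    then obtain x where x: "x \<in> G0 Q H" and "lim_stab x \<inter> window N = local_stab N p"
      and "a = mk_arr x g"
      unfolding basic_open_def using mk_arr_eq by auto
    moreover from this have "x N = cls Q H N p" using G0_eq_cls_iff [OF x p] by simp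
    ultimately show "a \<in> {a \<in> arrows Q H. \<exists>x. a = mk_arr x g \<and> x N = cls Q H N p}"
      unfolding arrows_def by blast
  qed
qed

lemma basic_opens_eq:
  "basic_opens Q H = {basic_open H N T g | N T g. T \<in> local_stab N ` cosets H \<and> wlen Q g \<le> N}"
proof (intro set_eqI iffI)
  fix U assume "U \<in> basic_opens Q H"
  then obtain N p g where p: "p \<in> cosets H" and g: "wlen Q g \<le> N"
    and "U = {a \<in> arrows Q H. \<exists>x. a = mk_arr x g \<and> x N = cls Q H N p}"
    unfolding basic_opens_def En_def by blast
  then have "U = basic_open H N (local_stab N p) g" using basic_open_eq [OF p] by simp
  moreover have "local_stab N p \<in> local_stab N ` cosets H" using p by blast
  ultimately show "U \<in> {basic_open H N T g | N T g. T \<in> local_stab N ` cosets H \<and> wlen Q g \<le> N}"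
    using g by blast
next
  fix U assume "U \<in> {basic_open H N T g | N T g. T \<in> local_stab N ` cosets H \<and> wlen Q g \<le> N}"
  then obtain N p g where p: "p \<in> cosets H" and g: "wlen Q g \<le> N"
    and "U = basic_open H N (local_stab N p) g"
    by blast
  then have "U = {a \<in> arrows Q H. \<exists>x. a = mk_arr x g \<and> x N = cls Q H N p}"
    using basic_open_eq [OF p] by simp
  moreover have "cls Q H N p \<in> En Q H N" unfolding En_def using p by blast
  ultimately show "U \<in> basic_opens Q H"
    unfolding basic_opens_def using g by blast
qed

lemma arrows_eq_Union_basic_opens: "arrows Q H = \<Union>(basic_opens Q H)"
proof
  show "arrows Q H \<subseteq> \<Union>(basic_opens Q H)"
  proof
    fix a assume "a \<in> arrows Q H"
    then obtain x g where x: "x \<in> G0 Q H" and a: "a = (x, lcoset (lim_stab x) g)"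
      unfolding arrows_eq by blast
    let ?N = "wlen Q g"
    have "a \<in> basic_open H ?N (local_stab ?N (rep x ?N)) g"
      unfolding basic_open_def using a x lim_stab_window [OF x] by blast
    moreover have "basic_open H ?N (local_stab ?N (rep x ?N)) g \<in> basic_opens Q H"
      unfolding basic_opens_eq using G0_rep(1) [OF x] by blast
    ultimately show "a \<in> \<Union>(basic_opens Q H)" by blast
  qed
  show "\<Union>(basic_opens Q H) \<subseteq> arrows Q H"
    unfolding basic_opens_def by blast
qed

lemma Gtop_eq: "Gtop Q H = topology_generated_by (basic_opens Q H)"
  unfolding Gtop_def arrows_eq_Union_basic_opens
  by (metis subtopology_topspace topology_generated_by_topspace)

section \<open>Uniform recurrence and transport of units\<close>

text \<open>The stabiliser \<open>aHa\<^sup>-\<^sup>1\<close> of a coset \<open>aH\<close> lies in the orbit closure of \<open>H'\<close>, and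
  agreeing with it on the finite set \<open>window n\<close> is an open condition in \<open>Sub(\<Gamma>)\<close>.\<close>

lemma local_stabs_subset_if_URS:
  assumes Z: "URS Z" and H: "H \<in> Z" and H': "H' \<in> Z"
  shows "local_stab n ` cosets H \<subseteq> local_stab n ` cosets H'"
proof
  fix T assume "T \<in> local_stab n ` cosets H"
  then obtain a where "T = local_stab n ((\<lambda>h. a + h) ` H)"
    unfolding cosets_def by blast
  then have T: "T = conj a H \<inter> window n"
    using stab_coset [OF URS_subgroup [OF Z H]] unfolding local_stab_def by simp
  have "conj a H \<in> Z" using Z H unfolding URS_def by blast
  then have closure: "conj a H \<in> Sub_top closure_of range (\<lambda>b. conj b H')"
    using Z H' unfolding URS_def by blast
  let ?U = "{K \<in> topspace Sub_top. K \<inter> window n = T}"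
  have "openin Sub_top ?U" unfolding T by (rule openin_Sub_top_trace [OF finite_window])
  moreover have "conj a H \<in> ?U" using closure T by (simp add: in_closure_of)
  ultimately obtain K where "K \<in> range (\<lambda>b. conj b H')" and "K \<in> ?U"
    using closure unfolding in_closure_of by (meson conjunct2 spec)
  then obtain b where "conj b H' \<in> ?U" by blast
  then have "T = local_stab n ((\<lambda>h. b + h) ` H')"
    using stab_coset [OF URS_subgroup [OF Z H']] unfolding local_stab_def by simp
  then show "T \<in> local_stab n ` cosets H'" unfolding cosets_def by (rule image_eqI) (rule rangeI)
qed

definition transport :: "'g set \<Rightarrow> (nat \<Rightarrow> 'g set set) \<Rightarrow> nat \<Rightarrow> 'g set set" where
  "transport H' x = inv_into (G0 Q H') lim_stab (lim_stab x)"

definition transport_arrow :: "'g set \<Rightarrow> 'g arrow \<Rightarrow> 'g arrow" where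
  "transport_arrow H' a = (transport H' (fst a), snd a)"

context
  fixes H H' :: "'g set"
  assumes same_local_stabs: "\<And>n. local_stab n ` cosets H = local_stab n ` cosets H'"
begin

lemma same_lim_stab_image: "lim_stab ` G0 Q H = lim_stab ` G0 Q H'"
  by (simp add: set_eq_iff lim_stab_image_iff same_local_stabs)

lemma
  assumes "x \<in> G0 Q H"
  shows transport_in_G0: "transport H' x \<in> G0 Q H'"
    and lim_stab_transport: "lim_stab (transport H' x) = lim_stab x"
proof -
  have "lim_stab x \<in> lim_stab ` G0 Q H'" using assms same_lim_stab_image by blast
  then show "transport H' x \<in> G0 Q H'" "lim_stab (transport H' x) = lim_stab x"
    unfolding transport_def by (simp_all add: inv_into_into f_inv_into_f)
qed

lemma transport_eqI: "x \<in> G0 Q H \<Longrightarrow> y \<in> G0 Q H' \<Longrightarrow> lim_stab x = lim_stab y \<Longrightarrow> transport H' x = y"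
  using inj_on_lim_stab [of H'] transport_in_G0 lim_stab_transport by (metis inj_onD)

lemma inj_on_transport: "inj_on (transport H') (G0 Q H)"
  by (rule inj_onI) (metis lim_stab_transport inj_on_lim_stab inj_onD)

lemma transport_image: "transport H' ` {x \<in> G0 Q H. P (lim_stab x)} = {y \<in> G0 Q H'. P (lim_stab y)}"
proof (intro set_eqI iffI)
  fix y assume "y \<in> transport H' ` {x \<in> G0 Q H. P (lim_stab x)}"
  then show "y \<in> {y \<in> G0 Q H'. P (lim_stab y)}" using transport_in_G0 lim_stab_transport by auto
next
  fix y assume y: "y \<in> {y \<in> G0 Q H'. P (lim_stab y)}"
  then have "lim_stab y \<in> lim_stab ` G0 Q H" using same_lim_stab_image by blast
  then obtain x where x: "x \<in> G0 Q H" and "lim_stab x = lim_stab y" by blast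
  then have "transport H' x = y" using y by (simp add: transport_eqI)
  then show "y \<in> transport H' ` {x \<in> G0 Q H. P (lim_stab x)}"
    using x y \<open>lim_stab x = lim_stab y\<close> by force
qed

lemma transport_pt_act:
  "x \<in> G0 Q H \<Longrightarrow> transport H' (pt_act Q H g x) = pt_act Q H' g (transport H' x)"
  by (simp add: transport_eqI pt_act_in_G0 transport_in_G0 lim_stab_pt_act lim_stab_transport)

lemma transport_arrow_basic_open:
  "transport_arrow H' ` basic_open H N T g = basic_open H' N T g"
proof -
  have "transport_arrow H' ` basic_open H N T g
      = (\<lambda>y. (y, lcoset (lim_stab y) g)) ` transport H' ` {x \<in> G0 Q H. lim_stab x \<inter> window N = T}"
    unfolding basic_open_def transport_arrow_def image_image
    by (intro image_cong) (simp_all add: lim_stab_transport)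
  also have "\<dots> = (\<lambda>y. (y, lcoset (lim_stab y) g)) ` {y \<in> G0 Q H'. lim_stab y \<inter> window N = T}"
    using transport_image [of "\<lambda>K. K \<inter> window N = T"] by simp
  finally show ?thesis unfolding basic_open_def .
qed

lemma transport_arrow_basic_opens: "(`) (transport_arrow H') ` basic_opens Q H = basic_opens Q H'"
proof -
  have "(`) (transport_arrow H') ` basic_opens Q H
      = {transport_arrow H' ` basic_open H N T g | N T g. T \<in> local_stab N ` cosets H' \<and> wlen Q g \<le> N}"
    unfolding basic_opens_eq same_local_stabs by blast
  then show ?thesis unfolding transport_arrow_basic_open basic_opens_eq .
qed

lemma inj_on_transport_arrow: "inj_on (transport_arrow H') (arrows Q H)"
  using inj_on_transport fst_arrow_in_G0 unfolding transport_arrow_def inj_on_def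
  by (metis prod.expand fst_conv snd_conv)

lemma bij_betw_transport_arrow: "bij_betw (transport_arrow H') (arrows Q H) (arrows Q H')"
  unfolding bij_betw_def arrows_eq_Union_basic_opens image_Union transport_arrow_basic_opens
  using inj_on_transport_arrow arrows_eq_Union_basic_opens by simp

lemma homeomorphic_map_transport_arrow:
  "homeomorphic_map (Gtop Q H) (Gtop Q H') (transport_arrow H')"
  unfolding Gtop_eq transport_arrow_basic_opens [symmetric]
  using inj_on_transport_arrow arrows_eq_Union_basic_opens
  by (simp add: homeomorphic_map_topology_generated_by)

lemma src_transport_arrow:
  "a \<in> arrows Q H \<Longrightarrow> src Q H' (transport_arrow H' a) = transport H' (src Q H a)"
  unfolding src_def transport_arrow_def elt_def by (simp add: transport_pt_act fst_arrow_in_G0)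

lemma rng_transport_arrow: "rng (transport_arrow H' b) = transport H' (rng b)"
  unfolding rng_def transport_arrow_def by simp

lemma transport_arrow_gmul:
  assumes "a \<in> arrows Q H"
  shows "transport_arrow H' (gmul a b) = gmul (transport_arrow H' a) (transport_arrow H' b)"
proof -
  have x: "fst a \<in> G0 Q H" using fst_arrow_in_G0 [OF assms] .
  show ?thesis
    unfolding gmul_def transport_arrow_def elt_def
    by (simp add: mk_arr_eq [OF x] mk_arr_eq [OF transport_in_G0 [OF x]] lim_stab_transport [OF x])
qed

lemma groupoid_iso_transport_arrow: "groupoid_iso Q H H' (transport_arrow H')"
  unfolding groupoid_iso_def
proof (intro conjI ballI bij_betw_transport_arrow homeomorphic_map_transport_arrow impI)
  fix a b assume a: "a \<in> arrows Q H" and b: "b \<in> arrows Q H"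
  have "src Q H a \<in> G0 Q H" "rng b \<in> G0 Q H"
    unfolding src_def rng_def using pt_act_in_G0 fst_arrow_in_G0 a b by auto
  then show "src Q H a = rng b \<longleftrightarrow> src Q H' (transport_arrow H' a) = rng (transport_arrow H' b)"
    unfolding src_transport_arrow [OF a] rng_transport_arrow
    using inj_on_transport by (simp add: inj_on_eq_iff)
  show "transport_arrow H' (gmul a b) = gmul (transport_arrow H' a) (transport_arrow H' b)"
    using transport_arrow_gmul [OF a] .
qed

end

end

theorem proposition3p2:
  fixes Q :: "'g::group_add set" and Z :: "'g set set" and H H' :: "'g set"
  assumes "fin_sym_gen Q"
    and "URS Z"
    and "H \<in> Z" and "H' \<in> Z"
  shows "groupoids_isomorphic Q H H'"
proof -
  interpret generating_set Q by standard fact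
  have "local_stab n ` cosets H = local_stab n ` cosets H'" for n
    using local_stabs_subset_if_URS assms(2-4) by (intro subset_antisym)
  then show ?thesis
    unfolding groupoids_isomorphic_def using groupoid_iso_transport_arrow by blast
qed

end
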